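(* Let $\alpha(\lambda)=\prod_{k=1}^R(\lambda-\alpha_k)$ be a monic polynomial of degree $R$. Then the separate states associated with $\alpha$ satisfy $$\langle\alpha|=(-1)^{RN}\langle1|\prod_{k=1}^RD(\alpha_k),\qquad |\alpha\rangle=(-1)^{RN}\prod_{k=1}^RD(\alpha_k)|1\rangle,$$ where $\langle1|$ and $|1\rangle$ are the separate states associated with the constant function $1$.
   Context: Fix $N\ge1$, nonzero $\eta\in\mathbb C$ and $\xi_1,\dots,\xi_N\in\mathbb C$ with $\xi_a\neq\xi_b$, $\xi_a\ne\xi_b\pm\eta$ for $a\ne b$. Let $\mathbb V=\bigotimes_{n=1}^NV_n$, $V_n\cong\mathbb C^2$. Let $R(\lambda)$ be the $4\times4$ matrix with rows $(\lambda+\eta,0,0,0),(0,\lambda,\eta,0),(0,\eta,\lambda,0),(0,0,0,\lambda+\eta)$ and $T_0(\lambda)=R_{0N}(\lambda-\xi_N)\cdots R_{01}(\lambda-\xi_1)$ on $V_0\otimes\mathbb V$, written in the auxiliary space $V_0\cong\mathbb C^2$ as the $2\times2$ matrix with entries $A(\lambda),B(\lambda)$ (first row), $C(\lambda),D(\lambda)$ (second row). Put $a(\lambda)=\prod_n(\lambda-\xi_n+\eta)$, $d(\lambda)=\prod_n(\lambda-\xi_n)$. Let $|0\rangle=\bigotimes_n(1,0)^T$ and $\langle0|=\bigotimes_n(1,0)$. For complex numbers $x_1,\dots,x_M$ let $V(x_1,\dots,x_M)=\prod_{1\le b<a\le M}(x_a-x_b)$ and $V(\{\xi\})=V(\xi_1,\dots,\xi_N)$.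 For $\mathbf h\in\{0,1\}^N$ put $|\mathbf h\rangle=V(\{\xi\})^{-1}\prod_n(B(\xi_n)/a(\xi_n))^{h_n}|0\rangle$ and $\langle\mathbf h|=V(\{\xi\})^{-1}\langle0|\prod_n(C(\xi_n)/d(\xi_n-\eta))^{h_n}$. For functions $\alpha,\beta$ on $\mathbb C$ the separate states are $\langle\alpha|=\sum_{\mathbf h\in\{0,1\}^N}\prod_{a=1}^N\alpha(\xi_a-h_a\eta)\,V(\xi_1-h_1\eta,\dots,\xi_N-h_N\eta)\langle\mathbf h|$ and $|\beta\rangle=\sum_{\mathbf h}\prod_{a=1}^N\beta(\xi_a-h_a\eta)\,V(\xi_1+h_1\eta,\dots,\xi_N+h_N\eta)|\mathbf h\rangle$. *)

theory Defs
  imports Complex_Main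
begin

text \<open>Basis configurations of the quantum space V = V_1 (x) ... (x) V_N, V_n = C^2:
  a configuration s assigns to each site n in {1..N} the basis index s n in {0,1}
  (0 = (1,0)^T, 1 = (0,1)^T), and is 0 outside {1..N}.\<close>

type_synonym cfg = "nat \<Rightarrow> nat"
type_synonym 'i op = "'i \<Rightarrow> 'i \<Rightarrow> complex"

definition cfgs :: "nat \<Rightarrow> cfg set" where
  "cfgs N = {s. (\<forall>n. s n \<le> 1) \<and> (\<forall>n. n \<notin> {1..N} \<longrightarrow> s n = 0)}"

text \<open>Basis of V_0 (x) V: auxiliary index a in {0,1} together with a configuration.\<close>
definition auxcfgs :: "nat \<Rightarrow> (nat \<times> cfg) set" where
  "auxcfgs N = {0, 1} \<times> cfgs N"

definition idm :: "'i op" where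
  "idm i j = (if i = j then 1 else 0)"

definition mmul :: "'i set \<Rightarrow> 'i op \<Rightarrow> 'i op \<Rightarrow> 'i op" where
  "mmul I P Q = (\<lambda>i k. \<Sum>j\<in>I. P i j * Q j k)"

definition mvec :: "'i set \<Rightarrow> 'i op \<Rightarrow> ('i \<Rightarrow> complex) \<Rightarrow> 'i \<Rightarrow> complex" where
  "mvec I P v = (\<lambda>i. \<Sum>j\<in>I. P i j * v j)"

definition vecm :: "'i set \<Rightarrow> ('i \<Rightarrow> complex) \<Rightarrow> 'i op \<Rightarrow> 'i \<Rightarrow> complex" where
  "vecm I v P = (\<lambda>j. \<Sum>i\<in>I. v i * P i j)"

fun oprod :: "'i set \<Rightarrow> (nat \<Rightarrow> 'i op) \<Rightarrow> nat \<Rightarrow> 'i op" where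
  "oprod I F 0 = idm"
| "oprod I F (Suc n) = mmul I (oprod I F n) (F (Suc n))"

text \<open>The R-matrix, rows as in the paper, basis of C^2 (x) C^2 ordered
  (0,0),(0,1),(1,0),(1,1), i.e. (a,b) has index 2a+b.\<close>
definition Rrows :: "complex \<Rightarrow> complex \<Rightarrow> complex list list" where
  "Rrows \<eta> l = [[l + \<eta>, 0, 0, 0], [0, l, \<eta>, 0], [0, \<eta>, l, 0], [0, 0, 0, l + \<eta>]]"

definition Rmat :: "complex \<Rightarrow> complex \<Rightarrow> (nat \<times> nat) \<Rightarrow> (nat \<times> nat) \<Rightarrow> complex" where
  "Rmat \<eta> l ab cd = Rrows \<eta> l ! (2 * fst ab + snd ab) ! (2 * fst cd + snd cd)"

definition R0n :: "complex \<Rightarrow> nat \<Rightarrow> complex \<Rightarrow> (nat \<times> cfg) op" where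
  "R0n \<eta> n mu = (\<lambda>(a, s) (c, t).
     if (\<forall>m. m \<noteq> n \<longrightarrow> s m = t m) then Rmat \<eta> mu (a, s n) (c, t n) else 0)"

fun Tpart :: "nat \<Rightarrow> complex \<Rightarrow> (nat \<Rightarrow> complex) \<Rightarrow> complex \<Rightarrow> nat \<Rightarrow> (nat \<times> cfg) op" where
  "Tpart N \<eta> \<xi> l 0 = idm"
| "Tpart N \<eta> \<xi> l (Suc k) = mmul (auxcfgs N) (R0n \<eta> (Suc k) (l - \<xi> (Suc k))) (Tpart N \<eta> \<xi> l k)"

definition Tmon :: "nat \<Rightarrow> complex \<Rightarrow> (nat \<Rightarrow> complex) \<Rightarrow> complex \<Rightarrow> (nat \<times> cfg) op" where
  "Tmon N \<eta> \<xi> l = Tpart N \<eta> \<xi> l N"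

definition Aop :: "nat \<Rightarrow> complex \<Rightarrow> (nat \<Rightarrow> complex) \<Rightarrow> complex \<Rightarrow> cfg op" where
  "Aop N \<eta> \<xi> l = (\<lambda>s t. Tmon N \<eta> \<xi> l (0, s) (0, t))"
definition Bop :: "nat \<Rightarrow> complex \<Rightarrow> (nat \<Rightarrow> complex) \<Rightarrow> complex \<Rightarrow> cfg op" where
  "Bop N \<eta> \<xi> l = (\<lambda>s t. Tmon N \<eta> \<xi> l (0, s) (1, t))"
definition Cop :: "nat \<Rightarrow> complex \<Rightarrow> (nat \<Rightarrow> complex) \<Rightarrow> complex \<Rightarrow> cfg op" where
  "Cop N \<eta> \<xi> l = (\<lambda>s t. Tmon N \<eta> \<xi> l (1, s) (0, t))"
definition Dop :: "nat \<Rightarrow> complex \<Rightarrow> (nat \<Rightarrow> complex) \<Rightarrow> complex \<Rightarrow> cfg op" where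
  "Dop N \<eta> \<xi> l = (\<lambda>s t. Tmon N \<eta> \<xi> l (1, s) (1, t))"

definition afun :: "nat \<Rightarrow> complex \<Rightarrow> (nat \<Rightarrow> complex) \<Rightarrow> complex \<Rightarrow> complex" where
  "afun N \<eta> \<xi> l = (\<Prod>n\<in>{1..N}. l - \<xi> n + \<eta>)"
definition dfun :: "nat \<Rightarrow> (nat \<Rightarrow> complex) \<Rightarrow> complex \<Rightarrow> complex" where
  "dfun N \<xi> l = (\<Prod>n\<in>{1..N}. l - \<xi> n)"

definition vac :: "cfg \<Rightarrow> complex" where
  "vac s = (if (\<forall>n. s n = 0) then 1 else 0)"

definition vand :: "nat \<Rightarrow> (nat \<Rightarrow> complex) \<Rightarrow> complex" where
  "vand M x = (\<Prod>a\<in>{1..M}. \<Prod>b\<in>{1..<a}. x a - x b)"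

definition ket_h :: "nat \<Rightarrow> complex \<Rightarrow> (nat \<Rightarrow> complex) \<Rightarrow> cfg \<Rightarrow> cfg \<Rightarrow> complex" where
  "ket_h N \<eta> \<xi> h = (\<lambda>s. mvec (cfgs N)
      (oprod (cfgs N) (\<lambda>n. if h n = 1 then (\<lambda>u v. Bop N \<eta> \<xi> (\<xi> n) u v / afun N \<eta> \<xi> (\<xi> n)) else idm) N)
      vac s / vand N \<xi>)"

definition bra_h :: "nat \<Rightarrow> complex \<Rightarrow> (nat \<Rightarrow> complex) \<Rightarrow> cfg \<Rightarrow> cfg \<Rightarrow> complex" where
  "bra_h N \<eta> \<xi> h = (\<lambda>t. vecm (cfgs N) vac
      (oprod (cfgs N) (\<lambda>n. if h n = 1 then (\<lambda>u v. Cop N \<eta> \<xi> (\<xi> n) u v / dfun N \<xi> (\<xi> n - \<eta>)) else idm) N)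
      t / vand N \<xi>)"

definition sep_bra :: "nat \<Rightarrow> complex \<Rightarrow> (nat \<Rightarrow> complex) \<Rightarrow> (complex \<Rightarrow> complex) \<Rightarrow> cfg \<Rightarrow> complex" where
  "sep_bra N \<eta> \<xi> \<alpha> = (\<lambda>t. \<Sum>h\<in>cfgs N.
      (\<Prod>a\<in>{1..N}. \<alpha> (\<xi> a - of_nat (h a) * \<eta>)) * vand N (\<lambda>a. \<xi> a - of_nat (h a) * \<eta>)
      * bra_h N \<eta> \<xi> h t)"

definition sep_ket :: "nat \<Rightarrow> complex \<Rightarrow> (nat \<Rightarrow> complex) \<Rightarrow> (complex \<Rightarrow> complex) \<Rightarrow> cfg \<Rightarrow> complex" where
  "sep_ket N \<eta> \<xi> \<beta> = (\<lambda>s. \<Sum>h\<in>cfgs N.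
      (\<Prod>a\<in>{1..N}. \<beta> (\<xi> a - of_nat (h a) * \<eta>)) * vand N (\<lambda>a. \<xi> a + of_nat (h a) * \<eta>)
      * ket_h N \<eta> \<xi> h s)"

end

theory Submission
  imports Defs
begin

text \<open>Every ket \<open>|h\<rangle>\<close> and every bra \<open>\<langle>h|\<close> is an eigenvector of \<open>D(\<lambda>)\<close> with eigenvalue
  \<open>\<Prod>\<^sub>a (\<lambda> - \<xi>\<^sub>a + h\<^sub>a \<eta>)\<close>.  For the reference state this eigenvalue is \<open>d(\<lambda>)\<close>, and the
  exchange relations between \<open>D\<close> and \<open>C\<close> (resp. \<open>B\<close>), consequences of the RTT relation, show
  that applying \<open>C(\<xi>\<^sub>n)\<close> (resp. \<open>B(\<xi>\<^sub>n)\<close>) turns the factor \<open>\<lambda> - \<xi>\<^sub>n\<close> of the eigenvalue into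
  \<open>\<lambda> - \<xi>\<^sub>n + \<eta>\<close>, because the unwanted term carries the vanishing eigenvalue at \<open>\<xi>\<^sub>n\<close>.
  Hence \<open>\<Prod>\<^sub>k D(\<alpha>\<^sub>k)\<close> multiplies \<open>\<langle>h|\<close> by
  \<open>\<Prod>\<^sub>k \<Prod>\<^sub>a (\<alpha>\<^sub>k - \<xi>\<^sub>a + h\<^sub>a \<eta>) = (-1)\<^bsup>RN\<^esup> \<Prod>\<^sub>a \<alpha>(\<xi>\<^sub>a - h\<^sub>a \<eta>)\<close>, which is precisely the
  ratio between the coefficients of \<open>\<langle>h|\<close> in \<open>\<langle>\<alpha>|\<close> and in \<open>\<langle>1|\<close>; likewise for kets.\<close>

lemma mmul_assoc: "finite I \<Longrightarrow> mmul I (mmul I P Q) S = mmul I P (mmul I Q S)"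
  by (auto simp: mmul_def fun_eq_iff sum_distrib_left sum_distrib_right mult.assoc intro: sum.swap)

lemma vecm_mmul: "finite I \<Longrightarrow> vecm I (vecm I v P) Q = vecm I v (mmul I P Q)"
  by (auto simp: vecm_def mmul_def fun_eq_iff sum_distrib_left sum_distrib_right mult.assoc intro: sum.swap)

lemma mvec_mmul: "finite I \<Longrightarrow> mvec I P (mvec I Q v) = mvec I (mmul I P Q) v"
  by (auto simp: mvec_def mmul_def fun_eq_iff sum_distrib_left sum_distrib_right mult.assoc intro: sum.swap)

lemma vecm_idm: "finite I \<Longrightarrow> t \<in> I \<Longrightarrow> vecm I v idm t = v t"
  by (simp add: vecm_def idm_def mult.commute[of _ "if _ then _ else _"] if_distrib[of "\<lambda>x. x * _"]
      sum.delta' cong: if_cong)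

lemma mvec_idm: "finite I \<Longrightarrow> s \<in> I \<Longrightarrow> mvec I idm v s = v s"
  by (simp add: mvec_def idm_def if_distrib[of "\<lambda>x. x * _"] sum.delta cong: if_cong)

lemma vecm_sum: "vecm I (\<lambda>t. \<Sum>h\<in>H. c h * b h t) P t = (\<Sum>h\<in>H. c h * vecm I (b h) P t)"
  unfolding vecm_def by (simp add: sum_distrib_left sum_distrib_right mult_ac) (rule sum.swap)

lemma mvec_sum: "mvec I P (\<lambda>t. \<Sum>h\<in>H. c h * b h t) s = (\<Sum>h\<in>H. c h * mvec I P (b h) s)"
  unfolding mvec_def by (simp add: sum_distrib_left sum_distrib_right mult_ac) (rule sum.swap)

lemma mmul_intertwine:
  assumes "finite I"
    and RA: "\<And>i j. i \<in> I \<Longrightarrow> j \<in> I \<Longrightarrow> mmul I R A1 i j = mmul I A2 R i j"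
    and RB: "\<And>i j. i \<in> I \<Longrightarrow> j \<in> I \<Longrightarrow> mmul I R B1 i j = mmul I B2 R i j"
    and ij: "i \<in> I" "j \<in> I"
  shows "mmul I R (mmul I A1 B1) i j = mmul I (mmul I A2 B2) R i j"
proof -
  have "mmul I R (mmul I A1 B1) i j = mmul I (mmul I R A1) B1 i j"
    by (simp add: mmul_assoc assms)
  also have "\<dots> = mmul I (mmul I A2 R) B1 i j"
    unfolding mmul_def[of I _ B1] by (rule sum.cong[OF refl]) (simp add: RA ij)
  also have "\<dots> = mmul I A2 (mmul I R B1) i j"
    by (simp add: mmul_assoc assms)
  also have "\<dots> = mmul I A2 (mmul I B2 R) i j"
    unfolding mmul_def[of I A2] by (rule sum.cong[OF refl]) (simp add: RB ij)
  also have "\<dots> = mmul I (mmul I A2 B2) R i j"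
    by (simp add: mmul_assoc assms)
  finally show ?thesis .
qed

definition eigenbra :: "'i set \<Rightarrow> ('i \<Rightarrow> complex) \<Rightarrow> 'i op \<Rightarrow> complex \<Rightarrow> bool" where
  "eigenbra I w P c \<longleftrightarrow> (\<forall>t\<in>I. vecm I w P t = c * w t)"

definition eigenket :: "'i set \<Rightarrow> ('i \<Rightarrow> complex) \<Rightarrow> 'i op \<Rightarrow> complex \<Rightarrow> bool" where
  "eigenket I v P c \<longleftrightarrow> (\<forall>s\<in>I. mvec I P v s = c * v s)"

lemma eigenbra_cong: "(\<And>t. t \<in> I \<Longrightarrow> w t = w' t) \<Longrightarrow> eigenbra I w P c \<Longrightarrow> eigenbra I w' P c"
  unfolding eigenbra_def vecm_def by simp

lemma eigenket_cong: "(\<And>s. s \<in> I \<Longrightarrow> v s = v' s) \<Longrightarrow> eigenket I v P c \<Longrightarrow> eigenket I v' P c"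
  unfolding eigenket_def mvec_def by simp

lemma eigenbra_divide: "eigenbra I w P c \<Longrightarrow> eigenbra I (\<lambda>t. w t / z) P c"
  unfolding eigenbra_def vecm_def by (simp add: sum_divide_distrib[symmetric])

lemma eigenket_divide: "eigenket I v P c \<Longrightarrow> eigenket I (\<lambda>s. v s / z) P c"
  unfolding eigenket_def mvec_def by (simp add: sum_divide_distrib[symmetric])

lemma vecm_eigenbra: "eigenbra I w P c \<Longrightarrow> vecm I (vecm I w P) Q t = c * vecm I w Q t"
  by (simp add: eigenbra_def vecm_def sum_distrib_left mult.assoc)

lemma mvec_eigenket: "eigenket I v P c \<Longrightarrow> mvec I Q (mvec I P v) s = c * mvec I Q v s"
  by (simp add: eigenket_def mvec_def sum_distrib_left mult_ac)

lemma vecm_oprod_eigenbra: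
  assumes "finite I" and "t \<in> I" and "\<And>k. k \<in> {1..R} \<Longrightarrow> eigenbra I w (F k) (c k)"
  shows "vecm I w (oprod I F R) t = (\<Prod>k\<in>{1..R}. c k) * w t"
  using assms(2,3)
proof (induction R arbitrary: t)
  case 0 thus ?case by (simp add: vecm_idm assms)
next
  case (Suc R)
  have "vecm I w (oprod I F (Suc R)) t = vecm I (vecm I w (oprod I F R)) (F (Suc R)) t"
    by (simp add: vecm_mmul assms)
  also have "\<dots> = (\<Prod>k\<in>{1..R}. c k) * vecm I w (F (Suc R)) t"
    using Suc.IH Suc.prems(2) by (simp add: vecm_def sum_distrib_left mult.assoc)
  also have "\<dots> = (\<Prod>k\<in>{1..Suc R}. c k) * w t"
    using Suc.prems by (simp add: eigenbra_def prod.nat_ivl_Suc' mult_ac)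
  finally show ?case .
qed

lemma mvec_oprod_eigenket:
  assumes "finite I" and "s \<in> I" and "\<And>k. k \<in> {1..R} \<Longrightarrow> eigenket I v (F k) (c k)"
  shows "mvec I (oprod I F R) v s = (\<Prod>k\<in>{1..R}. c k) * v s"
  using assms(2,3)
proof (induction R arbitrary: s)
  case 0 thus ?case by (simp add: mvec_idm assms)
next
  case (Suc R)
  have "mvec I (oprod I F (Suc R)) v s = mvec I (oprod I F R) (mvec I (F (Suc R)) v) s"
    by (simp add: mvec_mmul assms)
  also have "\<dots> = c (Suc R) * mvec I (oprod I F R) v s"
    using Suc.prems(2)[of "Suc R"] by (simp add: mvec_eigenket)
  also have "\<dots> = (\<Prod>k\<in>{1..Suc R}. c k) * v s"
    using Suc by (simp add: prod.nat_ivl_Suc' mult_ac)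
  finally show ?case .
qed

lemma finite_cfgs: "finite (cfgs N)"
proof -
  have "cfgs N \<subseteq> {f. \<forall>x. (x \<in> {1..N} \<longrightarrow> f x \<in> {0,1}) \<and> (x \<notin> {1..N} \<longrightarrow> f x = 0)}"
    by (auto simp: cfgs_def le_Suc_eq)
  thus ?thesis by (rule finite_subset) (intro finite_set_of_finite_funs, auto)
qed

lemma cfgs_fun_upd: "s \<in> cfgs N \<Longrightarrow> n \<in> {1..N} \<Longrightarrow> (v::nat) \<le> 1 \<Longrightarrow> s(n := v) \<in> cfgs N"
  by (auto simp: cfgs_def)

lemma cfgs_le_1: "s \<in> cfgs N \<Longrightarrow> s n \<le> 1"
  by (auto simp: cfgs_def)

lemma zero_in_cfgs: "(\<lambda>_. 0) \<in> cfgs N"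
  by (simp add: cfgs_def)

lemma sum_auxcfgs: "(\<Sum>p\<in>auxcfgs N. g p) = (\<Sum>b\<in>{0,1::nat}. \<Sum>u\<in>cfgs N. g (b, u))"
  unfolding auxcfgs_def by (simp add: sum.cartesian_product'[symmetric] sum.Sigma finite_cfgs)

lemma sum_01_single: "(\<tau>::nat) \<le> 1 \<Longrightarrow> (\<And>w. w \<noteq> \<tau> \<Longrightarrow> g w = 0) \<Longrightarrow> (\<Sum>w\<in>{0,1::nat}. g w) = g \<tau>"
  by (cases \<tau>) auto

lemma sum_cfgs_agreeing_off_site:
  assumes s: "s \<in> cfgs N" and n: "n \<in> {1..N}"
  shows "(\<Sum>u\<in>cfgs N. if (\<forall>m. m \<noteq> n \<longrightarrow> s m = u m) then g u else 0)
         = (\<Sum>v\<in>{0,1::nat}. g (s(n := v)))"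
proof -
  have "(\<Sum>u\<in>cfgs N. if (\<forall>m. m \<noteq> n \<longrightarrow> s m = u m) then g u else 0)
      = (\<Sum>u\<in>{u\<in>cfgs N. \<forall>m. m \<noteq> n \<longrightarrow> s m = u m}. g u)"
    by (simp add: sum.inter_filter finite_cfgs)
  also have "{u\<in>cfgs N. \<forall>m. m \<noteq> n \<longrightarrow> s m = u m} = (\<lambda>v. s(n := v)) ` {0,1}"
  proof (intro set_eqI iffI)
    fix u assume u: "u \<in> {u\<in>cfgs N. \<forall>m. m \<noteq> n \<longrightarrow> s m = u m}"
    hence "u = s(n := u n)" by auto
    moreover have "u n \<in> {0,1}" using u cfgs_le_1[of u N n] by auto
    ultimately show "u \<in> (\<lambda>v. s(n := v)) ` {0,1}" by blast
  qed (use s n cfgs_fun_upd in auto)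
  also have "(\<Sum>u\<in>(\<lambda>v. s(n := v)) ` {0,1}. g u) = (\<Sum>v\<in>{0,1::nat}. g (s(n := v)))"
    by (subst sum.reindex) (auto simp: inj_on_def fun_eq_iff split: if_splits)
  finally show ?thesis .
qed

section \<open>Locality of the partial monodromy matrices\<close>

lemma Tpart_Suc_expand:
  assumes s: "s \<in> cfgs N" and k: "k < N"
  shows "Tpart N \<eta> \<xi> l (Suc k) (a, s) (c, t) =
    (\<Sum>b\<in>{0,1::nat}. \<Sum>v\<in>{0,1::nat}.
       Rmat \<eta> (l - \<xi> (Suc k)) (a, s (Suc k)) (b, v) * Tpart N \<eta> \<xi> l k (b, s(Suc k := v)) (c, t))"
proof -
  have "Tpart N \<eta> \<xi> l (Suc k) (a, s) (c, t) = (\<Sum>b\<in>{0,1::nat}. \<Sum>u\<in>cfgs N.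
     R0n \<eta> (Suc k) (l - \<xi> (Suc k)) (a, s) (b, u) * Tpart N \<eta> \<xi> l k (b, u) (c, t))"
    by (simp add: mmul_def sum_auxcfgs)
  also have "\<dots> = (\<Sum>b\<in>{0,1::nat}. \<Sum>u\<in>cfgs N. if (\<forall>m. m \<noteq> Suc k \<longrightarrow> s m = u m)
     then Rmat \<eta> (l - \<xi> (Suc k)) (a, s (Suc k)) (b, u (Suc k)) * Tpart N \<eta> \<xi> l k (b, u) (c, t) else 0)"
    by (intro sum.cong refl) (auto simp: R0n_def)
  also have "\<dots> = (\<Sum>b\<in>{0,1::nat}. \<Sum>v\<in>{0,1::nat}.
       Rmat \<eta> (l - \<xi> (Suc k)) (a, s (Suc k)) (b, v) * Tpart N \<eta> \<xi> l k (b, s(Suc k := v)) (c, t))"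
    by (intro sum.cong refl, subst sum_cfgs_agreeing_off_site[OF s]) (use k in auto)
  finally show ?thesis .
qed

lemma Tpart_nonzero_eq_off_sites:
  "Tpart N \<eta> \<xi> l k (a, s) (c, t) \<noteq> 0 \<Longrightarrow> m \<notin> {1..k} \<Longrightarrow> s m = t m"
proof (induction k arbitrary: a s)
  case 0 thus ?case by (simp add: idm_def split: if_splits)
next
  case (Suc k)
  have "(\<Sum>p\<in>auxcfgs N. R0n \<eta> (Suc k) (l - \<xi> (Suc k)) (a, s) p * Tpart N \<eta> \<xi> l k p (c, t)) \<noteq> 0"
    using Suc.prems(1) by (simp add: mmul_def)
  then obtain p where p: "R0n \<eta> (Suc k) (l - \<xi> (Suc k)) (a, s) p * Tpart N \<eta> \<xi> l k p (c, t) \<noteq> 0"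
    by (meson sum.not_neutral_contains_not_neutral)
  obtain b u where pu: "p = (b, u)" by force
  have "s m = u m" using p pu Suc.prems(2) by (auto simp: R0n_def split: if_splits)
  moreover have "u m = t m" using p pu Suc.prems(2) Suc.IH[of b u] by auto
  ultimately show ?case by simp
qed

lemma Tpart_fun_upd_beyond:
  assumes "k < n" "n \<le> N" "s \<in> cfgs N" "t \<in> cfgs N" "s n = t n" "w \<le> 1"
  shows "Tpart N \<eta> \<xi> l k (a, s(n := w)) (c, t(n := w)) = Tpart N \<eta> \<xi> l k (a, s) (c, t)"
  using assms
proof (induction k arbitrary: a s)
  case 0 thus ?case by (auto simp: idm_def fun_eq_iff)
next
  case (Suc k)
  have kN: "k < N" and ne: "Suc k \<noteq> n" using Suc.prems by auto
  have s': "s(n := w) \<in> cfgs N" using Suc.prems by (intro cfgs_fun_upd) auto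
  have "Tpart N \<eta> \<xi> l (Suc k) (a, s(n := w)) (c, t(n := w)) =
    (\<Sum>b\<in>{0,1::nat}. \<Sum>v\<in>{0,1::nat}. Rmat \<eta> (l - \<xi> (Suc k)) (a, s (Suc k)) (b, v) *
       Tpart N \<eta> \<xi> l k (b, (s(Suc k := v))(n := w)) (c, t(n := w)))"
    using Tpart_Suc_expand[OF s' kN] ne by (simp add: fun_upd_twist)
  also have "\<dots> = (\<Sum>b\<in>{0,1::nat}. \<Sum>v\<in>{0,1::nat}. Rmat \<eta> (l - \<xi> (Suc k)) (a, s (Suc k)) (b, v) *
       Tpart N \<eta> \<xi> l k (b, s(Suc k := v)) (c, t))"
  proof (intro sum.cong refl arg_cong2[where f = "(*)"])
    fix b v assume "v \<in> {0,1::nat}"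
    then show "Tpart N \<eta> \<xi> l k (b, (s(Suc k := v))(n := w)) (c, t(n := w)) = Tpart N \<eta> \<xi> l k (b, s(Suc k := v)) (c, t)"
      using Suc.prems ne kN cfgs_fun_upd[OF Suc.prems(3), of "Suc k" v]
      by (intro Suc.IH) (auto simp del: fun_upd_apply simp: fun_upd_other)
  qed
  also have "\<dots> = Tpart N \<eta> \<xi> l (Suc k) (a, s) (c, t)"
    using Tpart_Suc_expand[OF Suc.prems(3) kN] by simp
  finally show ?case .
qed

lemma Tpart_Suc_expand_target:
  assumes u: "u \<in> cfgs N" and t: "t \<in> cfgs N" and k: "k < N"
  shows "Tpart N \<eta> \<xi> l (Suc k) (b, u) (f, t) =
    (\<Sum>d\<in>{0,1::nat}. Rmat \<eta> (l - \<xi> (Suc k)) (b, u (Suc k)) (d, t (Suc k))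
       * Tpart N \<eta> \<xi> l k (d, u(Suc k := t (Suc k))) (f, t))"
  unfolding Tpart_Suc_expand[OF u k]
proof (intro sum.cong refl sum_01_single[OF cfgs_le_1[OF t]])
  fix d w assume "w \<noteq> t (Suc k)"
  hence "Tpart N \<eta> \<xi> l k (d, u(Suc k := w)) (f, t) = 0"
    using Tpart_nonzero_eq_off_sites[of N \<eta> \<xi> l k d "u(Suc k := w)" f t "Suc k"] by auto
  thus "Rmat \<eta> (l - \<xi> (Suc k)) (b, u (Suc k)) (d, w) * Tpart N \<eta> \<xi> l k (d, u(Suc k := w)) (f, t) = 0"
    by simp
qed

lemma sum_Tpart_product_fun_upd:
  assumes kn: "k < n" and nN: "n \<le> N" and s: "s \<in> cfgs N" and t: "t \<in> cfgs N" and v: "v \<le> 1"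
  shows "(\<Sum>u\<in>cfgs N. Tpart N \<eta> \<xi> l k (c, s(n := v)) (e, u) * Tpart N \<eta> \<xi> m k (d, u(n := t n)) (f, t))
       = (\<Sum>u\<in>cfgs N. Tpart N \<eta> \<xi> l k (c, s(n := t n)) (e, u) * Tpart N \<eta> \<xi> m k (d, u) (f, t))"
proof -
  have n1: "n \<in> {1..N}" using kn nN by auto
  have tn: "t n \<le> 1" using cfgs_le_1[OF t] .
  have vanish: "Tpart N \<eta> \<xi> l k (c, s(n := x)) (e, u) = 0" if "u n \<noteq> x" for x u
    using that Tpart_nonzero_eq_off_sites[of N \<eta> \<xi> l k c "s(n := x)" e u n] kn by auto
  have "(\<Sum>u\<in>cfgs N. Tpart N \<eta> \<xi> l k (c, s(n := v)) (e, u) * Tpart N \<eta> \<xi> m k (d, u(n := t n)) (f, t))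
     = (\<Sum>u\<in>{u\<in>cfgs N. u n = v}. Tpart N \<eta> \<xi> l k (c, s(n := t n)) (e, u(n := t n)) * Tpart N \<eta> \<xi> m k (d, u(n := t n)) (f, t))"
  proof (rule sum.mono_neutral_cong_right)
    fix u assume u: "u \<in> {u \<in> cfgs N. u n = v}"
    have "s(n := v) \<in> cfgs N" using cfgs_fun_upd[OF s n1 v] .
    hence "Tpart N \<eta> \<xi> l k (c, (s(n := v))(n := t n)) (e, u(n := t n)) = Tpart N \<eta> \<xi> l k (c, s(n := v)) (e, u)"
      using Tpart_fun_upd_beyond[OF kn nN, of "s(n := v)" u "t n"] u tn by auto
    thus "Tpart N \<eta> \<xi> l k (c, s(n := v)) (e, u) * Tpart N \<eta> \<xi> m k (d, u(n := t n)) (f, t) =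
          Tpart N \<eta> \<xi> l k (c, s(n := t n)) (e, u(n := t n)) * Tpart N \<eta> \<xi> m k (d, u(n := t n)) (f, t)"
      by simp
  qed (auto simp: finite_cfgs vanish)
  also have "\<dots> = (\<Sum>u\<in>{u\<in>cfgs N. u n = t n}. Tpart N \<eta> \<xi> l k (c, s(n := t n)) (e, u) * Tpart N \<eta> \<xi> m k (d, u) (f, t))"
    by (rule sum.reindex_bij_witness[of _ "\<lambda>u. u(n := v)" "\<lambda>u. u(n := t n)"])
       (auto intro: cfgs_fun_upd[OF _ n1 v] cfgs_fun_upd[OF _ n1 tn])
  also have "\<dots> = (\<Sum>u\<in>cfgs N. Tpart N \<eta> \<xi> l k (c, s(n := t n)) (e, u) * Tpart N \<eta> \<xi> m k (d, u) (f, t))"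
    by (rule sum.mono_neutral_left) (auto simp: finite_cfgs vanish)
  finally show ?thesis .
qed

section \<open>The RTT relation\<close>

definition Tentry :: "nat \<Rightarrow> complex \<Rightarrow> (nat \<Rightarrow> complex) \<Rightarrow> nat \<Rightarrow> nat \<Rightarrow> nat \<Rightarrow> complex \<Rightarrow> cfg op" where
  "Tentry N \<eta> \<xi> k a c l = (\<lambda>s t. Tpart N \<eta> \<xi> l k (a, s) (c, t))"

lemma Tentry_0: "Tentry N \<eta> \<xi> 0 a c l = (\<lambda>s t. if a = c \<and> s = t then 1 else 0)"
  by (simp add: Tentry_def idm_def fun_eq_iff)

lemma Bop_Tentry: "Bop N \<eta> \<xi> l = Tentry N \<eta> \<xi> N 0 1 l"
  by (simp add: Bop_def Tentry_def Tmon_def fun_eq_iff)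

lemma Cop_Tentry: "Cop N \<eta> \<xi> l = Tentry N \<eta> \<xi> N 1 0 l"
  by (simp add: Cop_def Tentry_def Tmon_def fun_eq_iff)

lemma Dop_Tentry: "Dop N \<eta> \<xi> l = Tentry N \<eta> \<xi> N 1 1 l"
  by (simp add: Dop_def Tentry_def Tmon_def fun_eq_iff)

lemma Tentry_Suc_mult:
  assumes k: "k < N" and s: "s \<in> cfgs N" and t: "t \<in> cfgs N" and u: "u \<in> cfgs N"
  shows "Tentry N \<eta> \<xi> (Suc k) a e l s u * Tentry N \<eta> \<xi> (Suc k) b f m u t =
    (\<Sum>c\<in>{0,1::nat}. \<Sum>d\<in>{0,1::nat}. \<Sum>v\<in>{0,1::nat}.
      (Rmat \<eta> (l - \<xi> (Suc k)) (a, s (Suc k)) (c, v) * Rmat \<eta> (m - \<xi> (Suc k)) (b, v) (d, t (Suc k))) *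
      (Tpart N \<eta> \<xi> l k (c, s(Suc k := v)) (e, u) * Tpart N \<eta> \<xi> m k (d, u(Suc k := t (Suc k))) (f, t)))"
proof -
  define n where "n = Suc k"
  define \<tau> where "\<tau> = t n"
  define Rl where "Rl = Rmat \<eta> (l - \<xi> n)"
  define Rm where "Rm = Rmat \<eta> (m - \<xi> n)"
  define Tl where "Tl = Tpart N \<eta> \<xi> l k"
  define Tm where "Tm = Tpart N \<eta> \<xi> m k"
  have kn: "k < n" using k by (simp add: n_def)
  have "Tentry N \<eta> \<xi> (Suc k) a e l s u * Tentry N \<eta> \<xi> (Suc k) b f m u t =
     (\<Sum>c\<in>{0,1::nat}. \<Sum>v\<in>{0,1::nat}. Rl (a, s n) (c, v) * Tl (c, s(n := v)) (e, u)) *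
     (\<Sum>d\<in>{0,1::nat}. Rm (b, u n) (d, \<tau>) * Tm (d, u(n := \<tau>)) (f, t))"
    using Tpart_Suc_expand[OF s k] Tpart_Suc_expand_target[OF u t k]
    by (simp add: Tentry_def n_def \<tau>_def Rl_def Rm_def Tl_def Tm_def)
  also have "\<dots> = (\<Sum>c\<in>{0,1::nat}. \<Sum>v\<in>{0,1::nat}. Rl (a, s n) (c, v) * Tl (c, s(n := v)) (e, u) *
     (\<Sum>d\<in>{0,1::nat}. Rm (b, v) (d, \<tau>) * Tm (d, u(n := \<tau>)) (f, t)))"
    unfolding sum_distrib_right
  proof (intro sum.cong refl)
    fix c v
    have "u n = v" if "Tl (c, s(n := v)) (e, u) \<noteq> 0"
      using that Tpart_nonzero_eq_off_sites[of N \<eta> \<xi> l k c "s(n := v)" e u n] kn by (auto simp: Tl_def)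
    thus "Rl (a, s n) (c, v) * Tl (c, s(n := v)) (e, u) * (\<Sum>d\<in>{0,1::nat}. Rm (b, u n) (d, \<tau>) * Tm (d, u(n := \<tau>)) (f, t)) =
          Rl (a, s n) (c, v) * Tl (c, s(n := v)) (e, u) * (\<Sum>d\<in>{0,1::nat}. Rm (b, v) (d, \<tau>) * Tm (d, u(n := \<tau>)) (f, t))"
      by (cases "Tl (c, s(n := v)) (e, u) = 0") auto
  qed
  also have "\<dots> = (\<Sum>c\<in>{0,1::nat}. \<Sum>v\<in>{0,1::nat}. \<Sum>d\<in>{0,1::nat}. (Rl (a, s n) (c, v) * Rm (b, v) (d, \<tau>)) *
       (Tl (c, s(n := v)) (e, u) * Tm (d, u(n := \<tau>)) (f, t)))"
    unfolding sum_distrib_left by (intro sum.cong refl) (simp only: mult_ac)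
  also have "\<dots> = (\<Sum>c\<in>{0,1::nat}. \<Sum>d\<in>{0,1::nat}. \<Sum>v\<in>{0,1::nat}. (Rl (a, s n) (c, v) * Rm (b, v) (d, \<tau>)) *
       (Tl (c, s(n := v)) (e, u) * Tm (d, u(n := \<tau>)) (f, t)))"
    by (intro sum.cong refl sum.swap)
  finally show ?thesis by (simp only: n_def \<tau>_def Rl_def Rm_def Tl_def Tm_def)
qed

lemma mmul_Tentry_Suc:
  assumes k: "k < N" and s: "s \<in> cfgs N" and t: "t \<in> cfgs N"
  shows "mmul (cfgs N) (Tentry N \<eta> \<xi> (Suc k) a e l) (Tentry N \<eta> \<xi> (Suc k) b f m) s t =
    (\<Sum>c\<in>{0,1::nat}. \<Sum>d\<in>{0,1::nat}.
      (\<Sum>v\<in>{0,1::nat}. Rmat \<eta> (l - \<xi> (Suc k)) (a, s (Suc k)) (c, v) * Rmat \<eta> (m - \<xi> (Suc k)) (b, v) (d, t (Suc k)))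
      * mmul (cfgs N) (Tentry N \<eta> \<xi> k c e l) (Tentry N \<eta> \<xi> k d f m) (s(Suc k := t (Suc k))) t)"
proof -
  define n where "n = Suc k"
  define \<tau> where "\<tau> = t n"
  define Rl where "Rl = Rmat \<eta> (l - \<xi> n)"
  define Rm where "Rm = Rmat \<eta> (m - \<xi> n)"
  define Tl where "Tl = Tpart N \<eta> \<xi> l k"
  define Tm where "Tm = Tpart N \<eta> \<xi> m k"
  have kn: "k < n" and nN: "n \<le> N" using k by (auto simp: n_def)
  have entry_product: "Tentry N \<eta> \<xi> (Suc k) a e l s u * Tentry N \<eta> \<xi> (Suc k) b f m u t =
     (\<Sum>c\<in>{0,1::nat}. \<Sum>d\<in>{0,1::nat}. \<Sum>v\<in>{0,1::nat}. (Rl (a, s n) (c, v) * Rm (b, v) (d, \<tau>)) *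
         (Tl (c, s(n := v)) (e, u) * Tm (d, u(n := \<tau>)) (f, t)))"
    if "u \<in> cfgs N" for u
    unfolding n_def \<tau>_def Rl_def Rm_def Tl_def Tm_def by (rule Tentry_Suc_mult[OF k s t that])
  have "mmul (cfgs N) (Tentry N \<eta> \<xi> (Suc k) a e l) (Tentry N \<eta> \<xi> (Suc k) b f m) s t =
     (\<Sum>c\<in>{0,1::nat}. \<Sum>d\<in>{0,1::nat}. \<Sum>v\<in>{0,1::nat}. (Rl (a, s n) (c, v) * Rm (b, v) (d, \<tau>)) *
         (\<Sum>u\<in>cfgs N. Tl (c, s(n := v)) (e, u) * Tm (d, u(n := \<tau>)) (f, t)))"
    unfolding mmul_def sum_distrib_left
    by (simp only: entry_product cong: sum.cong)
       (subst sum.swap, rule sum.cong[OF refl], subst sum.swap, rule sum.cong[OF refl], subst sum.swap, rule refl)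
  also have "\<dots> = (\<Sum>c\<in>{0,1::nat}. \<Sum>d\<in>{0,1::nat}. \<Sum>v\<in>{0,1::nat}. (Rl (a, s n) (c, v) * Rm (b, v) (d, \<tau>)) *
         mmul (cfgs N) (Tentry N \<eta> \<xi> k c e l) (Tentry N \<eta> \<xi> k d f m) (s(Suc k := t (Suc k))) t)"
  proof (intro sum.cong refl arg_cong2[where f = "(*)"])
    fix c d v assume "v \<in> {0,1::nat}"
    hence "v \<le> 1" by auto
    then show "(\<Sum>u\<in>cfgs N. Tl (c, s(n := v)) (e, u) * Tm (d, u(n := \<tau>)) (f, t)) =
        mmul (cfgs N) (Tentry N \<eta> \<xi> k c e l) (Tentry N \<eta> \<xi> k d f m) (s(Suc k := t (Suc k))) t"
      using sum_Tpart_product_fun_upd[OF kn nN s t, of v]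
      by (simp add: mmul_def Tentry_def Tl_def Tm_def \<tau>_def n_def)
  qed
  finally show ?thesis by (simp only: sum_distrib_right n_def \<tau>_def Rl_def Rm_def)
qed

definition aux_pairs :: "(nat \<times> nat) set" where
  "aux_pairs = {0,1} \<times> {0,1}"

lemma finite_aux_pairs: "finite aux_pairs"
  by (simp add: aux_pairs_def)

lemma aux_pairs_mem: "(1, 0) \<in> aux_pairs" "(1, 1) \<in> aux_pairs"
  by (simp_all add: aux_pairs_def)

lemma sum_aux_pairs: "(\<Sum>p\<in>aux_pairs. g p) = g (0, 0) + g (0, 1) + g (1, 0) + g (1, 1)"
  by (simp add: aux_pairs_def add.assoc)

definition Rflip :: "complex \<Rightarrow> complex \<Rightarrow> (nat \<times> nat) op" where
  "Rflip \<eta> x = (\<lambda>(a, b) (c, d). x * (if a = c \<and> b = d then 1 else 0) + \<eta> * (if a = d \<and> b = c then 1 else 0))"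

lemma Rmat_eq_Rflip:
  "a \<le> 1 \<Longrightarrow> b \<le> 1 \<Longrightarrow> c \<le> 1 \<Longrightarrow> d \<le> 1 \<Longrightarrow> Rmat \<eta> l (a, b) (c, d) = Rflip \<eta> l (a, b) (c, d)"
  by (cases a; cases b; cases c; cases d) (auto simp: Rmat_def Rrows_def Rflip_def)

text \<open>Entries of \<open>R\<^sub>1\<^sub>3(l) R\<^sub>2\<^sub>3(m)\<close> and \<open>R\<^sub>2\<^sub>3(m) R\<^sub>1\<^sub>3(l)\<close> as matrices on the two auxiliary
  spaces, for fixed basis indices \<open>\<sigma>, \<tau>\<close> of the third space.\<close>

definition R13_R23 :: "complex \<Rightarrow> complex \<Rightarrow> complex \<Rightarrow> nat \<Rightarrow> nat \<Rightarrow> (nat \<times> nat) op" where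
  "R13_R23 \<eta> l m \<sigma> \<tau> = (\<lambda>(a, b) (c, d). \<Sum>v\<in>{0,1::nat}. Rmat \<eta> l (a, \<sigma>) (c, v) * Rmat \<eta> m (b, v) (d, \<tau>))"

definition R23_R13 :: "complex \<Rightarrow> complex \<Rightarrow> complex \<Rightarrow> nat \<Rightarrow> nat \<Rightarrow> (nat \<times> nat) op" where
  "R23_R13 \<eta> l m \<sigma> \<tau> = (\<lambda>(a, b) (c, d). \<Sum>v\<in>{0,1::nat}. Rmat \<eta> m (b, \<sigma>) (d, v) * Rmat \<eta> l (a, v) (c, \<tau>))"

lemma yang_baxter:
  assumes "\<sigma> \<le> 1" "\<tau> \<le> 1" "i \<in> aux_pairs" "j \<in> aux_pairs"
  shows "mmul aux_pairs (Rflip \<eta> (l - m)) (R13_R23 \<eta> l m \<sigma> \<tau>) i j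
       = mmul aux_pairs (R23_R13 \<eta> l m \<sigma> \<tau>) (Rflip \<eta> (l - m)) i j"
proof -
  obtain a b c d where ij: "i = (a, b)" "j = (c, d)" "a \<le> 1" "b \<le> 1" "c \<le> 1" "d \<le> 1"
    using assms by (cases i; cases j) (auto simp: aux_pairs_def)
  show ?thesis
    using assms ij
    by (simp add: mmul_def sum_aux_pairs R13_R23_def R23_R13_def Rmat_eq_Rflip)
       (cases a; cases b; cases c; cases d; cases \<sigma>; cases \<tau>; simp add: Rflip_def algebra_simps)
qed

text \<open>The \<open>(s, t)\<close> entries of \<open>T\<^sub>1(l) T\<^sub>2(m)\<close> and \<open>T\<^sub>2(m) T\<^sub>1(l)\<close> on the first \<open>k\<close> sites,
  as matrices on the two auxiliary spaces.\<close>

definition T1_T2 :: "nat \<Rightarrow> complex \<Rightarrow> (nat \<Rightarrow> complex) \<Rightarrow> nat \<Rightarrow> complex \<Rightarrow> complex \<Rightarrow> cfg \<Rightarrow> cfg \<Rightarrow> (nat \<times> nat) op" where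
  "T1_T2 N \<eta> \<xi> k l m s t = (\<lambda>(c, d) (e, f). mmul (cfgs N) (Tentry N \<eta> \<xi> k c e l) (Tentry N \<eta> \<xi> k d f m) s t)"

definition T2_T1 :: "nat \<Rightarrow> complex \<Rightarrow> (nat \<Rightarrow> complex) \<Rightarrow> nat \<Rightarrow> complex \<Rightarrow> complex \<Rightarrow> cfg \<Rightarrow> cfg \<Rightarrow> (nat \<times> nat) op" where
  "T2_T1 N \<eta> \<xi> k l m s t = (\<lambda>(a, b) (c, d). mmul (cfgs N) (Tentry N \<eta> \<xi> k b d m) (Tentry N \<eta> \<xi> k a c l) s t)"

lemma T1_T2_Suc:
  assumes "k < N" "s \<in> cfgs N" "t \<in> cfgs N"
  shows "T1_T2 N \<eta> \<xi> (Suc k) l m s t i j =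
    mmul aux_pairs (R13_R23 \<eta> (l - \<xi> (Suc k)) (m - \<xi> (Suc k)) (s (Suc k)) (t (Suc k)))
      (T1_T2 N \<eta> \<xi> k l m (s(Suc k := t (Suc k))) t) i j"
  by (cases i; cases j)
     (simp add: T1_T2_def R13_R23_def mmul_Tentry_Suc[OF assms] mmul_def[of aux_pairs] sum_aux_pairs)

lemma T2_T1_Suc:
  assumes "k < N" "s \<in> cfgs N" "t \<in> cfgs N"
  shows "T2_T1 N \<eta> \<xi> (Suc k) l m s t i j =
    mmul aux_pairs (R23_R13 \<eta> (l - \<xi> (Suc k)) (m - \<xi> (Suc k)) (s (Suc k)) (t (Suc k)))
      (T2_T1 N \<eta> \<xi> k l m (s(Suc k := t (Suc k))) t) i j"
  by (cases i; cases j)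
     (simp add: T2_T1_def R23_R13_def mmul_Tentry_Suc[OF assms] mmul_def[of aux_pairs] sum_aux_pairs)

lemma sum_indicator_product:
  assumes "finite I" "s \<in> I"
  shows "(\<Sum>u\<in>I. (if P \<and> s = u then 1 else 0) * (if Q \<and> u = t then 1 else 0) :: complex)
       = (if P \<and> Q \<and> s = t then 1 else 0)"
proof -
  have "(\<Sum>u\<in>I. (if P \<and> s = u then 1 else 0) * (if Q \<and> u = t then 1 else 0) :: complex)
      = (\<Sum>u\<in>I. if s = u then (if P \<and> Q \<and> s = t then 1 else 0) else 0)"
    by (intro sum.cong refl) auto
  also have "\<dots> = (if P \<and> Q \<and> s = t then 1 else 0)"
    using assms by (simp add: sum.delta)
  finally show ?thesis .
qed

lemma T1_T2_0:
  "s \<in> cfgs N \<Longrightarrow> T1_T2 N \<eta> \<xi> 0 l m s t = (\<lambda>(c, d) (e, f). if c = e \<and> d = f \<and> s = t then 1 else 0)"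
  by (intro ext) (auto simp: T1_T2_def Tentry_0 mmul_def sum_indicator_product finite_cfgs)

lemma T2_T1_0:
  "s \<in> cfgs N \<Longrightarrow> T2_T1 N \<eta> \<xi> 0 l m s t = (\<lambda>(a, b) (c, d). if a = c \<and> b = d \<and> s = t then 1 else 0)"
  by (intro ext) (auto simp: T2_T1_def Tentry_0 mmul_def sum_indicator_product finite_cfgs)

lemma RTT_relation:
  assumes "k \<le> N" "s \<in> cfgs N" "t \<in> cfgs N" "i \<in> aux_pairs" "j \<in> aux_pairs"
  shows "mmul aux_pairs (Rflip \<eta> (l - m)) (T1_T2 N \<eta> \<xi> k l m s t) i j
       = mmul aux_pairs (T2_T1 N \<eta> \<xi> k l m s t) (Rflip \<eta> (l - m)) i j"
  using assms
proof (induction k arbitrary: s i j)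
  case 0
  then show ?case
    by (cases i; cases j) (auto simp: T1_T2_0 T2_T1_0 mmul_def sum_aux_pairs Rflip_def aux_pairs_def)
next
  case (Suc k)
  let ?n = "Suc k"
  let ?s' = "s(?n := t ?n)"
  have k: "k < N" using Suc.prems by simp
  have s': "?s' \<in> cfgs N" using Suc.prems k by (intro cfgs_fun_upd cfgs_le_1) auto
  have shift: "l - m = (l - \<xi> ?n) - (m - \<xi> ?n)" by simp
  have "mmul aux_pairs (Rflip \<eta> (l - m)) (T1_T2 N \<eta> \<xi> (Suc k) l m s t) i j =
        mmul aux_pairs (Rflip \<eta> (l - m))
          (mmul aux_pairs (R13_R23 \<eta> (l - \<xi> ?n) (m - \<xi> ?n) (s ?n) (t ?n)) (T1_T2 N \<eta> \<xi> k l m ?s' t)) i j"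
    unfolding mmul_def[of _ "Rflip _ _"] by (simp add: T1_T2_Suc[OF k Suc.prems(2,3)])
  also have "\<dots> = mmul aux_pairs
          (mmul aux_pairs (R23_R13 \<eta> (l - \<xi> ?n) (m - \<xi> ?n) (s ?n) (t ?n)) (T2_T1 N \<eta> \<xi> k l m ?s' t)) (Rflip \<eta> (l - m)) i j"
  proof (rule mmul_intertwine[OF finite_aux_pairs _ _ Suc.prems(4,5)])
    fix i j assume "i \<in> aux_pairs" "j \<in> aux_pairs"
    thus "mmul aux_pairs (Rflip \<eta> (l - m)) (R13_R23 \<eta> (l - \<xi> ?n) (m - \<xi> ?n) (s ?n) (t ?n)) i j =
          mmul aux_pairs (R23_R13 \<eta> (l - \<xi> ?n) (m - \<xi> ?n) (s ?n) (t ?n)) (Rflip \<eta> (l - m)) i j"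
      unfolding shift using Suc.prems by (intro yang_baxter cfgs_le_1)
  next
    fix i j assume "i \<in> aux_pairs" "j \<in> aux_pairs"
    thus "mmul aux_pairs (Rflip \<eta> (l - m)) (T1_T2 N \<eta> \<xi> k l m ?s' t) i j =
          mmul aux_pairs (T2_T1 N \<eta> \<xi> k l m ?s' t) (Rflip \<eta> (l - m)) i j"
      using Suc.IH[OF _ s' Suc.prems(3)] k by (simp del: fun_upd_apply)
  qed
  also have "\<dots> = mmul aux_pairs (T2_T1 N \<eta> \<xi> (Suc k) l m s t) (Rflip \<eta> (l - m)) i j"
    unfolding mmul_def[of _ _ "Rflip _ _"] by (simp add: T2_T1_Suc[OF k Suc.prems(2,3)])
  finally show ?case .
qed

lemma exchange_C_D:
  assumes "s \<in> cfgs N" "t \<in> cfgs N"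
  shows "(l - m) * mmul (cfgs N) (Cop N \<eta> \<xi> m) (Dop N \<eta> \<xi> l) s t =
    (l - m + \<eta>) * mmul (cfgs N) (Dop N \<eta> \<xi> l) (Cop N \<eta> \<xi> m) s t
    - \<eta> * mmul (cfgs N) (Dop N \<eta> \<xi> m) (Cop N \<eta> \<xi> l) s t"
  using RTT_relation[OF order.refl assms aux_pairs_mem(2,1), where \<eta> = \<eta> and \<xi> = \<xi> and l = l and m = m]
  by (simp add: mmul_def[of aux_pairs] sum_aux_pairs T1_T2_def T2_T1_def Rflip_def
      Dop_Tentry Cop_Tentry algebra_simps)

lemma exchange_D_B:
  assumes "s \<in> cfgs N" "t \<in> cfgs N"
  shows "(l - m) * mmul (cfgs N) (Dop N \<eta> \<xi> l) (Bop N \<eta> \<xi> m) s t =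
    (l - m + \<eta>) * mmul (cfgs N) (Bop N \<eta> \<xi> m) (Dop N \<eta> \<xi> l) s t
    - \<eta> * mmul (cfgs N) (Bop N \<eta> \<xi> l) (Dop N \<eta> \<xi> m) s t"
  using RTT_relation[OF order.refl assms aux_pairs_mem, where \<eta> = \<eta> and \<xi> = \<xi> and l = l and m = m]
  by (simp add: mmul_def[of aux_pairs] sum_aux_pairs T1_T2_def T2_T1_def Rflip_def
      Dop_Tentry Bop_Tentry algebra_simps)

lemma Tpart_vac_source:
  "k \<le> N \<Longrightarrow> s \<in> cfgs N \<Longrightarrow> (\<forall>n\<in>{1..k}. s n = 0) \<Longrightarrow>
    Tpart N \<eta> \<xi> l k (1, s) (1, t) = (if s = t then (\<Prod>n\<in>{1..k}. l - \<xi> n) else 0) \<and>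
    Tpart N \<eta> \<xi> l k (0, s) (1, t) = 0"
proof (induction k arbitrary: s)
  case 0 thus ?case by (simp add: idm_def)
next
  case (Suc k)
  have k: "k < N" using Suc.prems by simp
  have s0: "s(Suc k := 0) = s" using Suc.prems by auto
  have s1: "s(Suc k := 1) \<in> cfgs N" using Suc.prems k by (intro cfgs_fun_upd) auto
  have "\<forall>n\<in>{1..k}. (s(Suc k := 1)) n = 0" using Suc.prems by auto
  hence "Tpart N \<eta> \<xi> l k (0, s(Suc k := 1)) (1, t) = 0"
    using Suc.IH[OF _ s1] k by (simp del: fun_upd_apply)
  moreover have "Tpart N \<eta> \<xi> l k (1, s) (1, t) = (if s = t then (\<Prod>n\<in>{1..k}. l - \<xi> n) else 0)"
    "Tpart N \<eta> \<xi> l k (0, s) (1, t) = 0"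
    using Suc.IH[OF _ Suc.prems(2)] Suc.prems by auto
  ultimately show ?case
    unfolding Tpart_Suc_expand[OF Suc.prems(2) k] using s0 Suc.prems
    by (simp add: Rmat_eq_Rflip Rflip_def)
qed

lemma Tpart_vac_target:
  "k \<le> N \<Longrightarrow> s \<in> cfgs N \<Longrightarrow> t \<in> cfgs N \<Longrightarrow> (\<forall>n\<in>{1..k}. t n = 0) \<Longrightarrow>
    Tpart N \<eta> \<xi> l k (1, s) (1, t) = (if s = t then (\<Prod>n\<in>{1..k}. l - \<xi> n) else 0) \<and>
    Tpart N \<eta> \<xi> l k (1, s) (0, t) = 0"
proof (induction k arbitrary: s)
  case 0 thus ?case by (simp add: idm_def)
next
  case (Suc k)
  have k: "k < N" and tn: "t (Suc k) = 0" using Suc.prems by auto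
  have expand: "Tpart N \<eta> \<xi> l (Suc k) (1, s) (c, t) = (\<Sum>b\<in>{0,1::nat}.
      Rmat \<eta> (l - \<xi> (Suc k)) (1, s (Suc k)) (b, 0) * Tpart N \<eta> \<xi> l k (b, s(Suc k := 0)) (c, t))" for c
    using Tpart_Suc_expand_target[OF Suc.prems(2,3) k] tn by simp
  show ?case
  proof (cases "s (Suc k) = 0")
    case True
    hence "s(Suc k := 0) = s" by auto
    moreover have "Tpart N \<eta> \<xi> l k (1, s) (1, t) = (if s = t then (\<Prod>n\<in>{1..k}. l - \<xi> n) else 0)"
      "Tpart N \<eta> \<xi> l k (1, s) (0, t) = 0"
      using Suc.IH[OF _ Suc.prems(2,3)] Suc.prems by auto
    ultimately show ?thesis
      unfolding expand using True by (simp add: Rmat_eq_Rflip Rflip_def)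
  next
    case False
    hence "s (Suc k) = 1" and "s \<noteq> t" using cfgs_le_1[OF Suc.prems(2), of "Suc k"] tn by auto
    thus ?thesis unfolding expand by (simp add: Rmat_eq_Rflip Rflip_def)
  qed
qed

lemma vac_eq: "vac = (\<lambda>s. if s = (\<lambda>_. 0) then 1 else 0)"
  by (auto simp: vac_def fun_eq_iff)

lemma vac_eigenbra_D: "eigenbra (cfgs N) vac (Dop N \<eta> \<xi> l) (dfun N \<xi> l)"
  unfolding eigenbra_def
proof
  fix t assume t: "t \<in> cfgs N"
  have "vecm (cfgs N) vac (Dop N \<eta> \<xi> l) t = Dop N \<eta> \<xi> l (\<lambda>_. 0) t"
    by (simp add: vecm_def vac_eq if_distrib[of "\<lambda>x. x * _"] sum.delta finite_cfgs zero_in_cfgs cong: if_cong)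
  also have "\<dots> = dfun N \<xi> l * vac t"
    using Tpart_vac_source[of N N "\<lambda>_. 0" \<eta> \<xi> l t] zero_in_cfgs
    by (auto simp: Dop_def Tmon_def dfun_def vac_eq)
  finally show "vecm (cfgs N) vac (Dop N \<eta> \<xi> l) t = dfun N \<xi> l * vac t" .
qed

lemma vac_eigenket_D: "eigenket (cfgs N) vac (Dop N \<eta> \<xi> l) (dfun N \<xi> l)"
  unfolding eigenket_def
proof
  fix s assume s: "s \<in> cfgs N"
  have "mvec (cfgs N) (Dop N \<eta> \<xi> l) vac s = Dop N \<eta> \<xi> l s (\<lambda>_. 0)"
    by (simp add: mvec_def vac_eq mult.commute[of _ "if _ then _ else _"] if_distrib[of "\<lambda>x. x * _"]
        sum.delta' finite_cfgs zero_in_cfgs cong: if_cong)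
  also have "\<dots> = dfun N \<xi> l * vac s"
    using Tpart_vac_target[of N N s "\<lambda>_. 0" \<eta> \<xi> l] zero_in_cfgs s
    by (auto simp: Dop_def Tmon_def dfun_def vac_eq)
  finally show "mvec (cfgs N) (Dop N \<eta> \<xi> l) vac s = dfun N \<xi> l * vac s" .
qed

section \<open>Continuity in the spectral parameter\<close>

lemma Rrows_affine: "Rrows \<eta> \<mu> ! i ! j = \<mu> * (Rrows \<eta> 1 ! i ! j - Rrows \<eta> 0 ! i ! j) + Rrows \<eta> 0 ! i ! j"
proof -
  have "i = 0 \<or> i = 1 \<or> i = 2 \<or> i = 3 \<or> (\<exists>i'. i = Suc (Suc (Suc (Suc i'))))" by presburger
  moreover have "j = 0 \<or> j = 1 \<or> j = 2 \<or> j = 3 \<or> (\<exists>j'. j = Suc (Suc (Suc (Suc j'))))" by presburger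
  ultimately show ?thesis by (elim disjE exE) (simp_all add: Rrows_def numeral_eq_Suc algebra_simps)
qed

lemma isCont_R0n: "isCont (\<lambda>l. R0n \<eta> n (l - c) p q) l0"
proof -
  obtain a s b t where pq: "p = (a, s)" "q = (b, t)" by (cases p; cases q) auto
  show ?thesis
  proof (cases "\<forall>m. m \<noteq> n \<longrightarrow> s m = t m")
    case True
    thus ?thesis
      unfolding pq R0n_def by (simp add: Rmat_def Rrows_affine[of \<eta> "_ - c"] del: Rrows_def)
  next
    case False
    thus ?thesis unfolding pq R0n_def by (simp del: not_all)
  qed
qed

lemma isCont_Tpart: "isCont (\<lambda>l. Tpart N \<eta> \<xi> l k p q) l0"
  by (induction k arbitrary: p) (simp_all add: mmul_def continuous_intros isCont_R0n)

lemma isCont_Dop: "isCont (\<lambda>l. Dop N \<eta> \<xi> l u t) l0"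
  unfolding Dop_def Tmon_def by (rule isCont_Tpart)

lemma isCont_eq_at_point:
  fixes f g :: "'a::t2_space \<Rightarrow> 'b::t2_space"
  assumes "isCont f x" "isCont g x" "\<And>y. y \<noteq> x \<Longrightarrow> f y = g y" "at x \<noteq> bot"
  shows "f x = g x"
proof -
  have "(g \<longlongrightarrow> g x) (at x)" using assms(2) by (simp add: isCont_def)
  moreover have "eventually (\<lambda>y. g y = f y) (at x)" using assms(3) by (auto simp: eventually_at_filter)
  ultimately have "(f \<longlongrightarrow> g x) (at x)" by (rule Lim_transform_eventually)
  with assms(1,4) show ?thesis by (simp add: isCont_def tendsto_unique)
qed

section \<open>Creation operators shift the eigenvalue of \<open>D\<close>\<close>

lemma eigenbra_D_mult_C_off_point:
  assumes eig: "\<And>l. eigenbra (cfgs N) w (Dop N \<eta> \<xi> l) (E l)" and root: "E \<mu> = 0"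
    and shift: "E' l * (l - \<mu>) = E l * (l - \<mu> + \<eta>)" and l: "l \<noteq> \<mu>"
  shows "eigenbra (cfgs N) (vecm (cfgs N) w (Cop N \<eta> \<xi> \<mu>)) (Dop N \<eta> \<xi> l) (E' l)"
  unfolding eigenbra_def
proof
  fix t assume t: "t \<in> cfgs N"
  let ?C = "cfgs N"
  have "(l - \<mu>) * vecm ?C (vecm ?C w (Cop N \<eta> \<xi> \<mu>)) (Dop N \<eta> \<xi> l) t
      = (l - \<mu>) * vecm ?C w (mmul ?C (Cop N \<eta> \<xi> \<mu>) (Dop N \<eta> \<xi> l)) t"
    by (simp add: vecm_mmul finite_cfgs)
  also have "\<dots> = (\<Sum>u\<in>?C. w u * ((l - \<mu>) * mmul ?C (Cop N \<eta> \<xi> \<mu>) (Dop N \<eta> \<xi> l) u t))"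
    by (simp add: vecm_def sum_distrib_left mult_ac)
  also have "\<dots> = (\<Sum>u\<in>?C. w u * ((l - \<mu> + \<eta>) * mmul ?C (Dop N \<eta> \<xi> l) (Cop N \<eta> \<xi> \<mu>) u t
        - \<eta> * mmul ?C (Dop N \<eta> \<xi> \<mu>) (Cop N \<eta> \<xi> l) u t))"
    by (intro sum.cong refl) (simp add: exchange_C_D t)
  also have "\<dots> = (l - \<mu> + \<eta>) * vecm ?C w (mmul ?C (Dop N \<eta> \<xi> l) (Cop N \<eta> \<xi> \<mu>)) t
        - \<eta> * vecm ?C w (mmul ?C (Dop N \<eta> \<xi> \<mu>) (Cop N \<eta> \<xi> l)) t"
    by (simp add: vecm_def sum_distrib_left sum_subtractf right_diff_distrib mult_ac)
  also have "\<dots> = (l - \<mu> + \<eta>) * vecm ?C (vecm ?C w (Dop N \<eta> \<xi> l)) (Cop N \<eta> \<xi> \<mu>) t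
        - \<eta> * vecm ?C (vecm ?C w (Dop N \<eta> \<xi> \<mu>)) (Cop N \<eta> \<xi> l) t"
    by (simp add: vecm_mmul finite_cfgs)
  also have "\<dots> = (l - \<mu>) * (E' l * vecm ?C w (Cop N \<eta> \<xi> \<mu>) t)"
    using shift by (simp add: vecm_eigenbra[OF eig] root mult_ac)
  finally show "vecm ?C (vecm ?C w (Cop N \<eta> \<xi> \<mu>)) (Dop N \<eta> \<xi> l) t = E' l * vecm ?C w (Cop N \<eta> \<xi> \<mu>) t"
    using l by simp
qed

lemma eigenket_D_mult_B_off_point:
  assumes eig: "\<And>l. eigenket (cfgs N) v (Dop N \<eta> \<xi> l) (E l)" and root: "E \<mu> = 0"
    and shift: "E' l * (l - \<mu>) = E l * (l - \<mu> + \<eta>)" and l: "l \<noteq> \<mu>"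
  shows "eigenket (cfgs N) (mvec (cfgs N) (Bop N \<eta> \<xi> \<mu>) v) (Dop N \<eta> \<xi> l) (E' l)"
  unfolding eigenket_def
proof
  fix s assume s: "s \<in> cfgs N"
  let ?C = "cfgs N"
  have "(l - \<mu>) * mvec ?C (Dop N \<eta> \<xi> l) (mvec ?C (Bop N \<eta> \<xi> \<mu>) v) s
      = (l - \<mu>) * mvec ?C (mmul ?C (Dop N \<eta> \<xi> l) (Bop N \<eta> \<xi> \<mu>)) v s"
    by (simp add: mvec_mmul finite_cfgs)
  also have "\<dots> = (\<Sum>u\<in>?C. ((l - \<mu>) * mmul ?C (Dop N \<eta> \<xi> l) (Bop N \<eta> \<xi> \<mu>) s u) * v u)"
    by (simp add: mvec_def sum_distrib_left mult_ac)
  also have "\<dots> = (\<Sum>u\<in>?C. ((l - \<mu> + \<eta>) * mmul ?C (Bop N \<eta> \<xi> \<mu>) (Dop N \<eta> \<xi> l) s u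
        - \<eta> * mmul ?C (Bop N \<eta> \<xi> l) (Dop N \<eta> \<xi> \<mu>) s u) * v u)"
    by (intro sum.cong refl) (simp add: exchange_D_B s)
  also have "\<dots> = (l - \<mu> + \<eta>) * mvec ?C (mmul ?C (Bop N \<eta> \<xi> \<mu>) (Dop N \<eta> \<xi> l)) v s
        - \<eta> * mvec ?C (mmul ?C (Bop N \<eta> \<xi> l) (Dop N \<eta> \<xi> \<mu>)) v s"
    by (simp add: mvec_def sum_distrib_left sum_subtractf left_diff_distrib right_diff_distrib mult_ac)
  also have "\<dots> = (l - \<mu> + \<eta>) * mvec ?C (Bop N \<eta> \<xi> \<mu>) (mvec ?C (Dop N \<eta> \<xi> l) v) s
        - \<eta> * mvec ?C (Bop N \<eta> \<xi> l) (mvec ?C (Dop N \<eta> \<xi> \<mu>) v) s"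
    by (simp add: mvec_mmul finite_cfgs)
  also have "\<dots> = (l - \<mu>) * (E' l * mvec ?C (Bop N \<eta> \<xi> \<mu>) v s)"
    using shift by (simp add: mvec_eigenket[OF eig] root mult_ac)
  finally show "mvec ?C (Dop N \<eta> \<xi> l) (mvec ?C (Bop N \<eta> \<xi> \<mu>) v) s = E' l * mvec ?C (Bop N \<eta> \<xi> \<mu>) v s"
    using l by simp
qed

text \<open>The exchange relation only determines the action of \<open>D(l)\<close> for \<open>l \<noteq> \<mu>\<close>; both sides are
  continuous in \<open>l\<close>, which settles \<open>l = \<mu>\<close>.\<close>

lemma eigenbra_D_mult_C:
  assumes eig: "\<And>l. eigenbra (cfgs N) w (Dop N \<eta> \<xi> l) (E l)" and root: "E \<mu> = 0"
    and shift: "\<And>l. E' l * (l - \<mu>) = E l * (l - \<mu> + \<eta>)" and cont: "isCont E' \<mu>"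
  shows "eigenbra (cfgs N) (vecm (cfgs N) w (Cop N \<eta> \<xi> \<mu>)) (Dop N \<eta> \<xi> l) (E' l)"
proof (cases "l = \<mu>")
  case True
  let ?w = "vecm (cfgs N) w (Cop N \<eta> \<xi> \<mu>)"
  have "vecm (cfgs N) ?w (Dop N \<eta> \<xi> \<mu>) t = E' \<mu> * ?w t" if t: "t \<in> cfgs N" for t
  proof (rule isCont_eq_at_point[where f = "\<lambda>y. vecm (cfgs N) ?w (Dop N \<eta> \<xi> y) t" and g = "\<lambda>y. E' y * ?w t"])
    show "isCont (\<lambda>y. vecm (cfgs N) ?w (Dop N \<eta> \<xi> y) t) \<mu>"
      unfolding vecm_def[of _ ?w] by (intro continuous_intros isCont_Dop)
    show "vecm (cfgs N) ?w (Dop N \<eta> \<xi> y) t = E' y * ?w t" if "y \<noteq> \<mu>" for y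
      using eigenbra_D_mult_C_off_point[where E = E and E' = E' and l = y, OF eig root shift that] t by (simp add: eigenbra_def)
  qed (use cont in \<open>auto intro: continuous_intros\<close>)
  with True show ?thesis by (simp add: eigenbra_def)
qed (rule eigenbra_D_mult_C_off_point[where E = E and E' = E', OF eig root shift])

lemma eigenket_D_mult_B:
  assumes eig: "\<And>l. eigenket (cfgs N) v (Dop N \<eta> \<xi> l) (E l)" and root: "E \<mu> = 0"
    and shift: "\<And>l. E' l * (l - \<mu>) = E l * (l - \<mu> + \<eta>)" and cont: "isCont E' \<mu>"
  shows "eigenket (cfgs N) (mvec (cfgs N) (Bop N \<eta> \<xi> \<mu>) v) (Dop N \<eta> \<xi> l) (E' l)"
proof (cases "l = \<mu>")
  case True
  let ?v = "mvec (cfgs N) (Bop N \<eta> \<xi> \<mu>) v"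
  have "mvec (cfgs N) (Dop N \<eta> \<xi> \<mu>) ?v s = E' \<mu> * ?v s" if s: "s \<in> cfgs N" for s
  proof (rule isCont_eq_at_point[where f = "\<lambda>y. mvec (cfgs N) (Dop N \<eta> \<xi> y) ?v s" and g = "\<lambda>y. E' y * ?v s"])
    show "isCont (\<lambda>y. mvec (cfgs N) (Dop N \<eta> \<xi> y) ?v s) \<mu>"
      unfolding mvec_def[of _ "Dop N \<eta> \<xi> _"] by (intro continuous_intros isCont_Dop)
    show "mvec (cfgs N) (Dop N \<eta> \<xi> y) ?v s = E' y * ?v s" if "y \<noteq> \<mu>" for y
      using eigenket_D_mult_B_off_point[where E = E and E' = E' and l = y, OF eig root shift that] s by (simp add: eigenket_def)
  qed (use cont in \<open>auto intro: continuous_intros\<close>)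
  with True show ?thesis by (simp add: eigenket_def)
qed (rule eigenket_D_mult_B_off_point[where E = E and E' = E', OF eig root shift])

section \<open>The eigenbasis of \<open>D\<close>\<close>

definition D_eigenvalue :: "nat \<Rightarrow> complex \<Rightarrow> (nat \<Rightarrow> complex) \<Rightarrow> cfg \<Rightarrow> complex \<Rightarrow> complex" where
  "D_eigenvalue N \<eta> \<xi> h l = (\<Prod>a\<in>{1..N}. l - \<xi> a + of_nat (h a) * \<eta>)"

lemma D_eigenvalue_cong: "(\<And>a. a \<in> {1..N} \<Longrightarrow> h a = h' a) \<Longrightarrow> D_eigenvalue N \<eta> \<xi> h = D_eigenvalue N \<eta> \<xi> h'"
  unfolding D_eigenvalue_def by (intro ext prod.cong) auto

lemma D_eigenvalue_zero: "D_eigenvalue N \<eta> \<xi> (\<lambda>_. 0) = dfun N \<xi>"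
  by (simp add: D_eigenvalue_def dfun_def fun_eq_iff)

lemma D_eigenvalue_root: "n \<in> {1..N} \<Longrightarrow> h n = 0 \<Longrightarrow> D_eigenvalue N \<eta> \<xi> h (\<xi> n) = 0"
  unfolding D_eigenvalue_def by (rule prod_zero) (auto intro!: bexI[of _ n])

lemma D_eigenvalue_fun_upd:
  assumes n: "n \<in> {1..N}" and hn: "h n = 0"
  shows "D_eigenvalue N \<eta> \<xi> (h(n := 1)) l * (l - \<xi> n) = D_eigenvalue N \<eta> \<xi> h l * (l - \<xi> n + \<eta>)"
proof -
  define P where "P = (\<Prod>a\<in>{1..N} - {n}. l - \<xi> a + of_nat (h a) * \<eta>)"
  have "D_eigenvalue N \<eta> \<xi> (h(n := 1)) l = (l - \<xi> n + \<eta>) * P"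
    unfolding D_eigenvalue_def P_def prod.remove[OF finite_atLeastAtMost n] by (auto intro!: prod.cong)
  moreover have "D_eigenvalue N \<eta> \<xi> h l = (l - \<xi> n) * P"
    unfolding D_eigenvalue_def P_def prod.remove[OF finite_atLeastAtMost n] by (simp add: hn)
  ultimately show ?thesis by simp
qed

lemma isCont_D_eigenvalue: "isCont (D_eigenvalue N \<eta> \<xi> h) x"
  unfolding D_eigenvalue_def by (intro continuous_intros)

lemma eigenbra_D_mult_C_site:
  assumes "\<And>l. eigenbra (cfgs N) w (Dop N \<eta> \<xi> l) (D_eigenvalue N \<eta> \<xi> h l)" "n \<in> {1..N}" "h n = 0"
  shows "eigenbra (cfgs N) (vecm (cfgs N) w (Cop N \<eta> \<xi> (\<xi> n))) (Dop N \<eta> \<xi> l) (D_eigenvalue N \<eta> \<xi> (h(n := 1)) l)"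
  by (rule eigenbra_D_mult_C[OF assms(1) D_eigenvalue_root[where h = h, OF assms(2,3)]
      D_eigenvalue_fun_upd[where h = h, OF assms(2,3)] isCont_D_eigenvalue])

lemma eigenket_D_mult_B_site:
  assumes "\<And>l. eigenket (cfgs N) v (Dop N \<eta> \<xi> l) (D_eigenvalue N \<eta> \<xi> h l)" "n \<in> {1..N}" "h n = 0"
  shows "eigenket (cfgs N) (mvec (cfgs N) (Bop N \<eta> \<xi> (\<xi> n)) v) (Dop N \<eta> \<xi> l) (D_eigenvalue N \<eta> \<xi> (h(n := 1)) l)"
  by (rule eigenket_D_mult_B[OF assms(1) D_eigenvalue_root[where h = h, OF assms(2,3)]
      D_eigenvalue_fun_upd[where h = h, OF assms(2,3)] isCont_D_eigenvalue])

lemma vecm_divide: "vecm I w (\<lambda>u v. P u v / z) = (\<lambda>t. vecm I w P t / z)"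
  by (simp add: vecm_def sum_divide_distrib fun_eq_iff)

lemma mvec_divide: "mvec I (\<lambda>u v. P u v / z) v = (\<lambda>s. mvec I P v s / z)"
  by (simp add: mvec_def sum_divide_distrib fun_eq_iff)

lemma eigenbra_D_partial_bra:
  assumes h: "h \<in> cfgs N"
  shows "j \<le> N \<Longrightarrow> eigenbra (cfgs N) (vecm (cfgs N) vac (oprod (cfgs N)
      (\<lambda>n. if h n = 1 then (\<lambda>u v. Cop N \<eta> \<xi> (\<xi> n) u v / dfun N \<xi> (\<xi> n - \<eta>)) else idm) j))
      (Dop N \<eta> \<xi> l) (D_eigenvalue N \<eta> \<xi> (\<lambda>a. if a \<le> j then h a else 0) l)"
proof (induction j arbitrary: l)
  case 0
  have "D_eigenvalue N \<eta> \<xi> (\<lambda>a. if a \<le> 0 then h a else 0) = dfun N \<xi>"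
    by (subst D_eigenvalue_zero[symmetric], rule D_eigenvalue_cong) auto
  moreover have "eigenbra (cfgs N) (vecm (cfgs N) vac idm) (Dop N \<eta> \<xi> l) (dfun N \<xi> l)"
    by (rule eigenbra_cong[OF _ vac_eigenbra_D]) (simp add: vecm_idm finite_cfgs)
  ultimately show ?case by simp
next
  case (Suc j)
  let ?F = "\<lambda>n. if h n = 1 then (\<lambda>u v. Cop N \<eta> \<xi> (\<xi> n) u v / dfun N \<xi> (\<xi> n - \<eta>)) else idm"
  let ?w = "vecm (cfgs N) vac (oprod (cfgs N) ?F j)"
  let ?h = "\<lambda>a. if a \<le> j then h a else 0"
  have IH: "\<And>l. eigenbra (cfgs N) ?w (Dop N \<eta> \<xi> l) (D_eigenvalue N \<eta> \<xi> ?h l)"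
    using Suc.IH Suc.prems by simp
  have step: "vecm (cfgs N) vac (oprod (cfgs N) ?F (Suc j)) = vecm (cfgs N) ?w (?F (Suc j))"
    by (simp add: vecm_mmul finite_cfgs)
  show ?case
  proof (cases "h (Suc j) = 1")
    case True
    have "(\<lambda>a. if a \<le> Suc j then h a else 0) = ?h(Suc j := 1)"
      using True by (auto simp: fun_eq_iff le_Suc_eq)
    moreover have "eigenbra (cfgs N) (vecm (cfgs N) ?w (Cop N \<eta> \<xi> (\<xi> (Suc j)))) (Dop N \<eta> \<xi> l)
        (D_eigenvalue N \<eta> \<xi> (?h(Suc j := 1)) l)"
      using Suc.prems by (intro eigenbra_D_mult_C_site[OF IH]) auto
    moreover have "vecm (cfgs N) ?w (?F (Suc j))
        = (\<lambda>t. vecm (cfgs N) ?w (Cop N \<eta> \<xi> (\<xi> (Suc j))) t / dfun N \<xi> (\<xi> (Suc j) - \<eta>))"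
      using True by (simp add: vecm_divide)
    ultimately show ?thesis
      unfolding step by (simp add: eigenbra_divide)
  next
    case False
    hence "D_eigenvalue N \<eta> \<xi> (\<lambda>a. if a \<le> Suc j then h a else 0) = D_eigenvalue N \<eta> \<xi> ?h"
      using cfgs_le_1[OF h, of "Suc j"] by (intro D_eigenvalue_cong) (auto simp: le_Suc_eq)
    moreover have "eigenbra (cfgs N) (vecm (cfgs N) ?w idm) (Dop N \<eta> \<xi> l) (D_eigenvalue N \<eta> \<xi> ?h l)"
      by (rule eigenbra_cong[OF _ IH]) (simp add: vecm_idm finite_cfgs)
    ultimately show ?thesis
      unfolding step using False by simp
  qed
qed

lemma eigenket_D_partial_ket:
  assumes h: "h \<in> cfgs N"
  shows "j \<le> N \<Longrightarrow> (\<And>l. eigenket (cfgs N) v (Dop N \<eta> \<xi> l) (D_eigenvalue N \<eta> \<xi> (\<lambda>a. if j < a then h a else 0) l)) \<Longrightarrow>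
    eigenket (cfgs N) (mvec (cfgs N) (oprod (cfgs N)
      (\<lambda>n. if h n = 1 then (\<lambda>u v. Bop N \<eta> \<xi> (\<xi> n) u v / afun N \<eta> \<xi> (\<xi> n)) else idm) j) v)
      (Dop N \<eta> \<xi> l) (D_eigenvalue N \<eta> \<xi> h l)"
proof (induction j arbitrary: v l)
  case 0
  have "D_eigenvalue N \<eta> \<xi> (\<lambda>a. if 0 < a then h a else 0) = D_eigenvalue N \<eta> \<xi> h"
    by (rule D_eigenvalue_cong) auto
  moreover have "eigenket (cfgs N) (mvec (cfgs N) idm v) (Dop N \<eta> \<xi> l) (D_eigenvalue N \<eta> \<xi> (\<lambda>a. if 0 < a then h a else 0) l)"
    by (rule eigenket_cong[OF _ "0.prems"(2)]) (simp add: mvec_idm finite_cfgs)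
  ultimately show ?case by simp
next
  case (Suc j)
  let ?F = "\<lambda>n. if h n = 1 then (\<lambda>u v. Bop N \<eta> \<xi> (\<xi> n) u v / afun N \<eta> \<xi> (\<xi> n)) else idm"
  let ?h = "\<lambda>a. if Suc j < a then h a else 0"
  let ?v = "mvec (cfgs N) (?F (Suc j)) v"
  have step: "mvec (cfgs N) (oprod (cfgs N) ?F (Suc j)) v = mvec (cfgs N) (oprod (cfgs N) ?F j) ?v"
    by (simp add: mvec_mmul finite_cfgs)
  have "eigenket (cfgs N) ?v (Dop N \<eta> \<xi> l') (D_eigenvalue N \<eta> \<xi> (\<lambda>a. if j < a then h a else 0) l')" for l'
  proof (cases "h (Suc j) = 1")
    case True
    have "(\<lambda>a. if j < a then h a else 0) = ?h(Suc j := 1)"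
      using True by (auto simp: fun_eq_iff less_Suc_eq)
    moreover have "eigenket (cfgs N) (mvec (cfgs N) (Bop N \<eta> \<xi> (\<xi> (Suc j))) v) (Dop N \<eta> \<xi> l')
        (D_eigenvalue N \<eta> \<xi> (?h(Suc j := 1)) l')"
      using Suc.prems by (intro eigenket_D_mult_B_site) auto
    moreover have "?v = (\<lambda>s. mvec (cfgs N) (Bop N \<eta> \<xi> (\<xi> (Suc j))) v s / afun N \<eta> \<xi> (\<xi> (Suc j)))"
      using True by (simp add: mvec_divide)
    ultimately show ?thesis by (simp add: eigenket_divide)
  next
    case False
    hence "h (Suc j) = 0" using cfgs_le_1[OF h, of "Suc j"] by auto
    hence "(\<lambda>a. if j < a then h a else 0) = ?h"
      by (auto simp: fun_eq_iff) (metis Suc_lessI)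
    moreover have "eigenket (cfgs N) (mvec (cfgs N) idm v) (Dop N \<eta> \<xi> l') (D_eigenvalue N \<eta> \<xi> ?h l')"
      by (rule eigenket_cong[OF _ Suc.prems(2)]) (simp add: mvec_idm finite_cfgs)
    ultimately show ?thesis using False by simp
  qed
  then show ?case
    unfolding step using Suc.prems(1) by (intro Suc.IH) auto
qed

lemma bra_h_eigenbra_D: "h \<in> cfgs N \<Longrightarrow> eigenbra (cfgs N) (bra_h N \<eta> \<xi> h) (Dop N \<eta> \<xi> l) (D_eigenvalue N \<eta> \<xi> h l)"
  unfolding bra_h_def
  using eigenbra_D_partial_bra[of h N N \<eta> \<xi> l] D_eigenvalue_cong[of N "\<lambda>a. if a \<le> N then h a else 0" h \<eta> \<xi>]
  by (intro eigenbra_divide) simp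

lemma ket_h_eigenket_D: "h \<in> cfgs N \<Longrightarrow> eigenket (cfgs N) (ket_h N \<eta> \<xi> h) (Dop N \<eta> \<xi> l) (D_eigenvalue N \<eta> \<xi> h l)"
proof -
  assume h: "h \<in> cfgs N"
  have "D_eigenvalue N \<eta> \<xi> (\<lambda>a. if N < a then h a else 0) = dfun N \<xi>"
    by (subst D_eigenvalue_zero[symmetric], rule D_eigenvalue_cong) auto
  then have "eigenket (cfgs N) vac (Dop N \<eta> \<xi> l') (D_eigenvalue N \<eta> \<xi> (\<lambda>a. if N < a then h a else 0) l')" for l'
    by (simp add: vac_eigenket_D)
  then show ?thesis
    unfolding ket_h_def by (intro eigenket_divide eigenket_D_partial_ket[OF h order.refl])
qed

lemma vecm_oprod_eigenbra_sum:
  assumes "finite I" "t \<in> I" "\<And>h k. h \<in> H \<Longrightarrow> k \<in> {1..R} \<Longrightarrow> eigenbra I (b h) (F k) (e h k)"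
  shows "vecm I (\<lambda>t. \<Sum>h\<in>H. c h * b h t) (oprod I F R) t = (\<Sum>h\<in>H. c h * (\<Prod>k\<in>{1..R}. e h k) * b h t)"
proof -
  have "vecm I (b h) (oprod I F R) t = (\<Prod>k\<in>{1..R}. e h k) * b h t" if "h \<in> H" for h
    using assms(3)[OF that] by (intro vecm_oprod_eigenbra assms(1,2))
  then show ?thesis by (simp add: vecm_sum mult.assoc)
qed

lemma mvec_oprod_eigenket_sum:
  assumes "finite I" "s \<in> I" "\<And>h k. h \<in> H \<Longrightarrow> k \<in> {1..R} \<Longrightarrow> eigenket I (b h) (F k) (e h k)"
  shows "mvec I (oprod I F R) (\<lambda>s. \<Sum>h\<in>H. c h * b h s) s = (\<Sum>h\<in>H. c h * (\<Prod>k\<in>{1..R}. e h k) * b h s)"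
proof -
  have "mvec I (oprod I F R) (b h) s = (\<Prod>k\<in>{1..R}. e h k) * b h s" if "h \<in> H" for h
    using assms(3)[OF that] by (intro mvec_oprod_eigenket assms(1,2))
  then show ?thesis by (simp add: mvec_sum mult.assoc)
qed

lemma prod_shifted_roots_eq_D_eigenvalue:
  "(\<Prod>a\<in>{1..N}. \<Prod>k\<in>{1..R}. \<xi> a - of_nat (h a) * \<eta> - \<alpha>k k)
     = (-1) ^ (R * N) * (\<Prod>k\<in>{1..R}. D_eigenvalue N \<eta> \<xi> h (\<alpha>k k))"
proof -
  have "(\<Prod>a\<in>{1..N}. \<Prod>k\<in>{1..R}. \<xi> a - of_nat (h a) * \<eta> - \<alpha>k k)
      = (\<Prod>a\<in>{1..N}. \<Prod>k\<in>{1..R}. (-1) * (\<alpha>k k - \<xi> a + of_nat (h a) * \<eta>))"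
    by (intro prod.cong refl) simp
  also have "\<dots> = (\<Prod>a\<in>{1..N}. (-1) ^ R * (\<Prod>k\<in>{1..R}. \<alpha>k k - \<xi> a + of_nat (h a) * \<eta>))"
    by (intro prod.cong refl) (subst prod.distrib, simp)
  also have "\<dots> = ((-1) ^ R) ^ N * (\<Prod>a\<in>{1..N}. \<Prod>k\<in>{1..R}. \<alpha>k k - \<xi> a + of_nat (h a) * \<eta>)"
    by (subst prod.distrib) simp
  also have "\<dots> = (-1) ^ (R * N) * (\<Prod>k\<in>{1..R}. D_eigenvalue N \<eta> \<xi> h (\<alpha>k k))"
    unfolding power_mult D_eigenvalue_def by (subst prod.swap) (rule refl)
  finally show ?thesis .
qed

theorem proposition1:
  fixes N R :: nat and \<eta> :: complex and \<xi> \<alpha>k :: "nat \<Rightarrow> complex"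
  assumes "N \<ge> 1" and "\<eta> \<noteq> 0"
    and "\<forall>a\<in>{1..N}. \<forall>b\<in>{1..N}. a \<noteq> b \<longrightarrow>
           \<xi> a \<noteq> \<xi> b \<and> \<xi> a \<noteq> \<xi> b + \<eta> \<and> \<xi> a \<noteq> \<xi> b - \<eta>"
  shows "(\<forall>t\<in>cfgs N. sep_bra N \<eta> \<xi> (\<lambda>x. \<Prod>k\<in>{1..R}. x - \<alpha>k k) t
           = (-1) ^ (R * N) * vecm (cfgs N) (sep_bra N \<eta> \<xi> (\<lambda>_. 1))
               (oprod (cfgs N) (\<lambda>k. Dop N \<eta> \<xi> (\<alpha>k k)) R) t)
     \<and> (\<forall>s\<in>cfgs N. sep_ket N \<eta> \<xi> (\<lambda>x. \<Prod>k\<in>{1..R}. x - \<alpha>k k) s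
           = (-1) ^ (R * N) * mvec (cfgs N)
               (oprod (cfgs N) (\<lambda>k. Dop N \<eta> \<xi> (\<alpha>k k)) R) (sep_ket N \<eta> \<xi> (\<lambda>_. 1)) s)"
proof (intro conjI ballI)
  fix t assume t: "t \<in> cfgs N"
  have "vecm (cfgs N) (sep_bra N \<eta> \<xi> (\<lambda>_. 1)) (oprod (cfgs N) (\<lambda>k. Dop N \<eta> \<xi> (\<alpha>k k)) R) t
      = (\<Sum>h\<in>cfgs N. vand N (\<lambda>a. \<xi> a - of_nat (h a) * \<eta>)
          * (\<Prod>k\<in>{1..R}. D_eigenvalue N \<eta> \<xi> h (\<alpha>k k)) * bra_h N \<eta> \<xi> h t)"
    unfolding sep_bra_def by (subst vecm_oprod_eigenbra_sum[OF finite_cfgs t bra_h_eigenbra_D]) simp_all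
  then show "sep_bra N \<eta> \<xi> (\<lambda>x. \<Prod>k\<in>{1..R}. x - \<alpha>k k) t
      = (-1) ^ (R * N) * vecm (cfgs N) (sep_bra N \<eta> \<xi> (\<lambda>_. 1)) (oprod (cfgs N) (\<lambda>k. Dop N \<eta> \<xi> (\<alpha>k k)) R) t"
    unfolding sep_bra_def prod_shifted_roots_eq_D_eigenvalue by (simp add: sum_distrib_left mult_ac)
next
  fix s assume s: "s \<in> cfgs N"
  have "mvec (cfgs N) (oprod (cfgs N) (\<lambda>k. Dop N \<eta> \<xi> (\<alpha>k k)) R) (sep_ket N \<eta> \<xi> (\<lambda>_. 1)) s
      = (\<Sum>h\<in>cfgs N. vand N (\<lambda>a. \<xi> a + of_nat (h a) * \<eta>)
          * (\<Prod>k\<in>{1..R}. D_eigenvalue N \<eta> \<xi> h (\<alpha>k k)) * ket_h N \<eta> \<xi> h s)"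
    unfolding sep_ket_def by (subst mvec_oprod_eigenket_sum[OF finite_cfgs s ket_h_eigenket_D]) simp_all
  then show "sep_ket N \<eta> \<xi> (\<lambda>x. \<Prod>k\<in>{1..R}. x - \<alpha>k k) s
      = (-1) ^ (R * N) * mvec (cfgs N) (oprod (cfgs N) (\<lambda>k. Dop N \<eta> \<xi> (\<alpha>k k)) R) (sep_ket N \<eta> \<xi> (\<lambda>_. 1)) s"
    unfolding sep_ket_def prod_shifted_roots_eq_D_eigenvalue by (simp add: sum_distrib_left mult_ac)
qed
end
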